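(* Let $\mathcal{Y}_u=\{y_1,\dots,y_L\}$ be a finite set of (unseen test) class labels, and let $\mathbf{A}$ be a label–attribute matrix assigning to each label $y\in\mathcal{Y}_u$ a binary attribute vector $\mathbf{a}_y\in\{0,1\}^{N_a}$, where the vectors $\mathbf{a}_y$, $y\in\mathcal{Y}_u$, are pairwise distinct. Let $f^{(1)},\dots,f^{(N_a)}$ be binary attribute classifiers (e.g. trained on a training set $D_s$), and write $f(x)=(f^{(1)}(x),\dots,f^{(N_a)}(x))\in\{0,1\}^{N_a}$. Each input $x$ is classified by assigning it a label $\hat y(x)\in\mathcal{Y}_u$ whose attribute vector is closest to $f(x)$, i.e. $d(f(x),\mathbf{a}_{\hat y(x)})\le d(f(x),\mathbf{a}_{y})$ for all $y\in\mathcal{Y}_u$ (ties broken arbitrarily). Let $D_u=\{(x_i,y_i): i=1,\dots,N_u\}$ with $y_i\in\mathcal{Y}_u$ be a test set, and for each $m=1,\dots,N_a$ let $B_m\ge 0$ be an upper bound on the prediction loss of the $m$-th attribute classifier, i.e. $\frac{1}{N_u}\sum_{i=1}^{N_u}\Delta\big(f^{(m)}(x_i),\mathbf{a}_{y_i}^{(m)}\big)\le B_m$. Set $\bar B=\frac{1}{N_a}\sum_{m=1}^{N_a}B_m$. Then the generalization error rate $k/N_u$, where $k=\#\{i:\hat y(x_i)\neq y_i\}$ is the number of misclassified test samples, satisfies $$\frac{k}{N_u}\le \frac{2N_a\bar B}{\tau}.$$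
   Context: For binary values $a,b$, $\Delta(a,b)=1$ if $a\neq b$ and $0$ otherwise. For vectors $\mathbf{u},\mathbf{v}\in\{0,1\}^{N_a}$ with $m$-th entries $\mathbf{u}^{(m)},\mathbf{v}^{(m)}$, the generalized attribute distance is the Hamming distance $d(\mathbf{u},\mathbf{v})=\sum_{m=1}^{N_a}\Delta(\mathbf{u}^{(m)},\mathbf{v}^{(m)})$. The minimum attribute distance of $\mathbf{A}$ is $\tau=\min_{y\neq y'}d(\mathbf{a}_y,\mathbf{a}_{y'})$, the minimum over pairs of distinct labels $y,y'\in\mathcal{Y}_u$ (so $\tau\ge 1$). *)

theory Defs
  imports Main Complex_Main
begin

text \<open>Binary vectors in {0,1}^Na are modelled as functions nat => bool,
  of which only the entries 0..Na-1 are relevant.\<close>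

definition Delta :: "bool \<Rightarrow> bool \<Rightarrow> nat" where
  "Delta a b = (if a \<noteq> b then 1 else 0)"

definition attr_dist :: "nat \<Rightarrow> (nat \<Rightarrow> bool) \<Rightarrow> (nat \<Rightarrow> bool) \<Rightarrow> nat" where
  "attr_dist Na u v = (\<Sum>m<Na. Delta (u m) (v m))"

definition min_attr_dist :: "nat \<Rightarrow> 'y set \<Rightarrow> ('y \<Rightarrow> nat \<Rightarrow> bool) \<Rightarrow> nat" where
  "min_attr_dist Na Y a = Min {attr_dist Na (a y) (a y') | y y'. y \<in> Y \<and> y' \<in> Y \<and> y \<noteq> y'}"

end

theory Submission
  imports Defs
begin

text \<open>If a test sample is misclassified, its predicted and true attribute vectors are two
  distinct rows of the attribute matrix, hence at Hamming distance at least \<open>\<tau>\<close>. Since the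
  prediction is a nearest row to \<open>f(x)\<close>, the triangle inequality puts \<open>f(x)\<close> at distance at
  least \<open>\<tau>/2\<close> from the true row. Thus \<open>k \<tau> / 2\<close> is at most the total Hamming distance
  between classifier outputs \<open>f(x\<^sub>i)\<close> and true rows over the test set, which, summed attribute by attribute
  instead, is at most \<open>N\<^sub>u \<Sum>\<^sub>m B\<^sub>m\<close>.\<close>

lemma Delta_commute: "Delta a b = Delta b a"
  by (auto simp: Delta_def)

lemma Delta_triangle: "Delta a c \<le> Delta a b + Delta b c"
  by (auto simp: Delta_def)

lemma attr_dist_commute: "attr_dist N u v = attr_dist N v u"
  unfolding attr_dist_def by (metis Delta_commute)

lemma attr_dist_triangle: "attr_dist N u w \<le> attr_dist N u v + attr_dist N v w"
  unfolding attr_dist_def sum.distrib[symmetric] by (intro sum_mono Delta_triangle)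

lemma attr_dist_pos:
  assumes "m < N" and "u m \<noteq> v m"
  shows "attr_dist N u v > 0"
proof -
  have "Delta (u m) (v m) \<le> attr_dist N u v"
    unfolding attr_dist_def using assms(1) by (intro member_le_sum) auto
  with assms(2) show ?thesis by (simp add: Delta_def)
qed

lemma sum_attr_dist_swap:
  "(\<Sum>i\<in>I. attr_dist N (u i) (v i)) = (\<Sum>m<N. \<Sum>i\<in>I. Delta (u i m) (v i m))"
  unfolding attr_dist_def by (rule sum.swap)

lemma finite_pairwise_attr_dists:
  assumes "finite Y"
  shows "finite {attr_dist N (a y) (a y') | y y'. y \<in> Y \<and> y' \<in> Y \<and> y \<noteq> y'}"
proof (rule finite_subset)
  show "{attr_dist N (a y) (a y') | y y'. y \<in> Y \<and> y' \<in> Y \<and> y \<noteq> y'}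
        \<subseteq> (\<lambda>(y, y'). attr_dist N (a y) (a y')) ` (Y \<times> Y)" by auto
qed (use assms in simp)

lemma min_attr_dist_le:
  assumes "finite Y" "y \<in> Y" "y' \<in> Y" "y \<noteq> y'"
  shows "min_attr_dist N Y a \<le> attr_dist N (a y) (a y')"
  unfolding min_attr_dist_def using assms finite_pairwise_attr_dists[OF assms(1)]
  by (intro Min_le) auto

lemma min_attr_dist_pos:
  assumes "finite Y" and "y \<in> Y" "y' \<in> Y" "y \<noteq> y'"
    and distinct: "\<And>y y'. y \<in> Y \<Longrightarrow> y' \<in> Y \<Longrightarrow> y \<noteq> y' \<Longrightarrow> \<exists>m<N. a y m \<noteq> a y' m"
  shows "min_attr_dist N Y a > 0"
proof -
  let ?S = "{attr_dist N (a y) (a y') | y y'. y \<in> Y \<and> y' \<in> Y \<and> y \<noteq> y'}"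
  have "Min ?S \<in> ?S"
    using finite_pairwise_attr_dists[OF assms(1)] assms(2-4) by (intro Min_in) auto
  then obtain z z' where "Min ?S = attr_dist N (a z) (a z')" "z \<in> Y" "z' \<in> Y" "z \<noteq> z'"
    by blast
  with distinct obtain m where "Min ?S = attr_dist N (a z) (a z')" "m < N" "a z m \<noteq> a z' m"
    by blast
  then show ?thesis
    unfolding min_attr_dist_def by (simp add: attr_dist_pos)
qed

lemma min_attr_dist_le_twice_dist_to_farther:
  assumes "finite Y" "y \<in> Y" "y' \<in> Y" "y \<noteq> y'"
    and nearer: "attr_dist N w (a y') \<le> attr_dist N w (a y)"
  shows "min_attr_dist N Y a \<le> 2 * attr_dist N w (a y)"
proof -
  have "min_attr_dist N Y a \<le> attr_dist N (a y') (a y)"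
    using assms(1-4) by (intro min_attr_dist_le) auto
  also have "\<dots> \<le> attr_dist N (a y') w + attr_dist N w (a y)"
    by (rule attr_dist_triangle)
  also have "\<dots> \<le> 2 * attr_dist N w (a y)"
    using nearer by (simp add: attr_dist_commute[of N "a y'"])
  finally show ?thesis .
qed

theorem theorem1:
  fixes Y :: "'y set" and a :: "'y \<Rightarrow> nat \<Rightarrow> bool" and Na :: nat
    and f :: "'x \<Rightarrow> nat \<Rightarrow> bool" and yhat :: "'x \<Rightarrow> 'y"
    and Nu :: nat and xs :: "nat \<Rightarrow> 'x" and ys :: "nat \<Rightarrow> 'y"
    and B :: "nat \<Rightarrow> real"
  assumes finY: "finite Y" and cardY: "card Y \<ge> 2"
    and distinct: "\<And>y y'. y \<in> Y \<Longrightarrow> y' \<in> Y \<Longrightarrow> y \<noteq> y' \<Longrightarrow>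
                     \<exists>m<Na. a y m \<noteq> a y' m"
    and yhat_in: "\<And>x. yhat x \<in> Y"
    and yhat_min: "\<And>x y. y \<in> Y \<Longrightarrow> attr_dist Na (f x) (a (yhat x)) \<le> attr_dist Na (f x) (a y)"
    and Nu_pos: "Nu > 0"
    and ys_in: "\<And>i. i < Nu \<Longrightarrow> ys i \<in> Y"
    and B_nonneg: "\<And>m. m < Na \<Longrightarrow> B m \<ge> 0"
    and B_bound: "\<And>m. m < Na \<Longrightarrow>
        (\<Sum>i<Nu. real (Delta (f (xs i) m) (a (ys i) m))) / real Nu \<le> B m"
  shows "real (card {i. i < Nu \<and> yhat (xs i) \<noteq> ys i}) / real Nu
           \<le> 2 * real Na * ((\<Sum>m<Na. B m) / real Na) / real (min_attr_dist Na Y a)"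
proof -
  define t where "t = min_attr_dist Na Y a"
  define K where "K = {i. i < Nu \<and> yhat (xs i) \<noteq> ys i}"
  obtain y y' where y: "y \<in> Y" "y' \<in> Y" "y \<noteq> y'"
    using cardY card_le_Suc0_iff_eq[OF finY] by fastforce
  have t_pos: "t > 0"
    unfolding t_def by (rule min_attr_dist_pos[OF finY y distinct])
  have "Na > 0"
    using distinct[OF y] by auto
  have misclassified_far: "t \<le> 2 * attr_dist Na (f (xs i)) (a (ys i))" if "i \<in> K" for i
  proof -
    from that have "i < Nu" "ys i \<noteq> yhat (xs i)" by (auto simp: K_def)
    then show ?thesis
      unfolding t_def using yhat_min[OF ys_in]
      by (intro min_attr_dist_le_twice_dist_to_farther[OF finY ys_in yhat_in]) auto
  qed
  have "real (card K) * real t \<le> (\<Sum>i\<in>K. 2 * real (attr_dist Na (f (xs i)) (a (ys i))))"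
    using misclassified_far by (intro sum_bounded_below) (metis of_nat_le_iff of_nat_mult of_nat_numeral)
  also have "\<dots> \<le> (\<Sum>i<Nu. 2 * real (attr_dist Na (f (xs i)) (a (ys i))))"
    by (intro sum_mono2) (auto simp: K_def)
  also have "\<dots> = 2 * (\<Sum>m<Na. \<Sum>i<Nu. real (Delta (f (xs i) m) (a (ys i) m)))"
    by (simp add: sum_distrib_left[symmetric] sum_attr_dist_swap flip: of_nat_sum)
  also have "\<dots> \<le> 2 * (\<Sum>m<Na. real Nu * B m)"
    using B_bound Nu_pos by (intro mult_left_mono sum_mono) (simp_all add: divide_le_eq mult.commute)
  finally have "real (card K) * real t \<le> real Nu * (2 * (\<Sum>m<Na. B m))"
    by (simp add: sum_distrib_left mult.left_commute)
  then have "real (card K) / real Nu \<le> 2 * (\<Sum>m<Na. B m) / real t"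
    using t_pos Nu_pos by (simp add: divide_le_eq le_divide_eq mult.commute)
  with \<open>Na > 0\<close> show ?thesis by (simp add: K_def t_def)
qed

end
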